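(* Let $q$ be a prime power and $m\ge 1$. Let $f(x)=\sum_{i=0}^{m-1} f_i x^{[i]}$ be a $q$-polynomial over $\mathbb{F}_{q^m}$ (where $[i]$ denotes $q^i$), and let $\bar f(x)$ be its full $q$-reverse. Let $\mathcal{A}=\{\alpha_0,\dots,\alpha_{m-1}\}$ and $\mathcal{B}=\{\beta_0,\dots,\beta_{m-1}\}$ be ordered bases of $\mathbb{F}_{q^m}$ over $\mathbb{F}_q$, with dual bases $\mathcal{A}'=\{\alpha'_0,\dots,\alpha'_{m-1}\}$ and $\mathcal{B}'=\{\beta'_0,\dots,\beta'_{m-1}\}$. Then for any $M\in\mathbb{F}_q^{m\times m}$, $$M=[f(x)]_{\mathcal{A}}^{\mathcal{B}} \iff M^T=[\bar f(x)]_{\mathcal{B}'}^{\mathcal{A}'}.$$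
   Context: A $q$-polynomial over $\mathbb{F}_{q^m}$ is $f(x)=\sum_i f_i x^{[i]}$ with $f_i\in\mathbb{F}_{q^m}$ and $x^{[i]}=x^{q^i}$; its evaluation is an $\mathbb{F}_q$-linear map $\mathbb{F}_{q^m}\to\mathbb{F}_{q^m}$. Coefficients are indexed cyclically: $f_i:=f_{i \bmod m}$ for all integers $i$. The full $q$-reverse of $f(x)$ is $\bar f(x)=\sum_{i=0}^{m-1}\bar f_i x^{[i]}$ with $\bar f_i=f_{-i}^{[i]}=(f_{-i})^{q^i}$. For a linear map $T:\mathbb{F}_{q^m}\to\mathbb{F}_{q^m}$ and ordered bases $\mathcal{A}=\{\alpha_i\}$, $\mathcal{B}=\{\beta_j\}$, $[T]_{\mathcal{A}}^{\mathcal{B}}$ is the unique matrix over $\mathbb{F}_q$ with $T(\alpha_i)=\sum_j ([T]_{\mathcal{A}}^{\mathcal{B}})_{ij}\beta_j$ for all $i$ (row convention). The dual basis $\mathcal{A}'=\{\alpha'_j\}$ of $\mathcal{A}$ satisfies $\mathrm{Tr}(\alpha_i\alpha'_j)=1$ if $i=j$ and $0$ otherwise, where $\mathrm{Tr}(x)=\sum_{\ell=0}^{m-1}x^{[\ell]}$. All indices start at 0. *)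

theory Defs
  imports "Jordan_Normal_Form.Matrix"
begin

text \<open>The ambient field F_{q^m} is a finite field type 'a with CARD('a) = q^m;
  the subfield F_q is the set of fixed points of x \<mapsto> x^q.\<close>

definition Fq :: "nat \<Rightarrow> 'a::field set" where
  "Fq q = {x. x ^ q = x}"

definition trace :: "nat \<Rightarrow> nat \<Rightarrow> 'a::field \<Rightarrow> 'a" where
  "trace q m x = (\<Sum>l<m. x ^ (q ^ l))"

definition qpoly_eval :: "nat \<Rightarrow> nat \<Rightarrow> (nat \<Rightarrow> 'a::field) \<Rightarrow> 'a \<Rightarrow> 'a" where
  "qpoly_eval q m f x = (\<Sum>i<m. f i * x ^ (q ^ i))"

definition qrev :: "nat \<Rightarrow> nat \<Rightarrow> (nat \<Rightarrow> 'a::field) \<Rightarrow> nat \<Rightarrow> 'a" where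
  "qrev q m f i = (f ((m - i mod m) mod m)) ^ (q ^ i)"

definition is_basis :: "nat \<Rightarrow> nat \<Rightarrow> (nat \<Rightarrow> 'a::field) \<Rightarrow> bool" where
  "is_basis q m b \<longleftrightarrow> (\<forall>y. \<exists>!c. (\<forall>i<m. c i \<in> Fq q) \<and> (\<forall>i\<ge>m. c i = 0)
       \<and> y = (\<Sum>i<m. c i * b i))"

definition is_dual_basis :: "nat \<Rightarrow> nat \<Rightarrow> (nat \<Rightarrow> 'a::field) \<Rightarrow> (nat \<Rightarrow> 'a) \<Rightarrow> bool" where
  "is_dual_basis q m a a' \<longleftrightarrow>
     (\<forall>i<m. \<forall>j<m. trace q m (a i * a' j) = (if i = j then 1 else 0))"

definition coords :: "nat \<Rightarrow> nat \<Rightarrow> (nat \<Rightarrow> 'a::field) \<Rightarrow> 'a \<Rightarrow> nat \<Rightarrow> 'a" where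
  "coords q m b y = (THE c. (\<forall>i<m. c i \<in> Fq q) \<and> (\<forall>i\<ge>m. c i = 0)
       \<and> y = (\<Sum>i<m. c i * b i))"

text \<open>Matrix of T w.r.t. bases A, B (row convention): T(a_i) = sum_j M_{ij} b_j.\<close>
definition rep_mat :: "nat \<Rightarrow> nat \<Rightarrow> ('a::field \<Rightarrow> 'a) \<Rightarrow> (nat \<Rightarrow> 'a) \<Rightarrow> (nat \<Rightarrow> 'a) \<Rightarrow> 'a mat" where
  "rep_mat q m T a b = mat m m (\<lambda>(i, j). coords q m b (T (a i)) j)"

end

theory Submission
  imports Defs "HOL-Number_Theory.Residues" "HOL-Computational_Algebra.Polynomial"
begin

text \<open>
  The trace form \<open>Tr(x y)\<close> is nondegenerate, since a nonzero linearized polynomial of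
  \<open>q\<close>-degree below \<open>m\<close> has fewer than \<open>q^m\<close> roots. Hence the dual of a basis is a basis,
  and the coordinates of \<open>y\<close> in a basis are its trace pairings with the dual basis, so that
  \<open>[T]_A^B (i, j) = Tr(T(alpha_i) beta'_j)\<close>. The full \<open>q\<close>-reverse is the adjoint of \<open>f\<close> for the
  trace form, \<open>Tr(f(x) y) = Tr(x fbar(y))\<close>: the Frobenius is additive and, as \<open>x^(q^m) = x\<close>,
  its exponents only matter modulo \<open>m\<close>, so the substitution \<open>i = -k, n = l + k\<close> matches the
  two expanded double sums term by term. Therefore
  \<open>[fbar]_B'^A' (j, i) = Tr(fbar(beta'_j) alpha_i) = Tr(f(alpha_i) beta'_j) = [f]_A^B (i, j)\<close>.
\<close>

lemma power_card_minus_one_eq_one: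
  fixes x :: "'a::{finite,field}"
  assumes "x \<noteq> 0"
  shows "x ^ (card (UNIV :: 'a set) - 1) = 1"
proof -
  let ?U = "UNIV - {0::'a}"
  have "(\<Prod>y\<in>?U. x * y) = (\<Prod>y\<in>?U. y)"
    by (rule prod.reindex_bij_witness[of _ "\<lambda>y. y / x" "\<lambda>y. x * y"]) (use assms in auto)
  moreover have "(\<Prod>y\<in>?U. x * y) = x ^ card ?U * (\<Prod>y\<in>?U. y)"
    by (simp add: prod.distrib)
  moreover have "(\<Prod>y\<in>?U. y) \<noteq> 0"
    by simp
  ultimately show ?thesis
    by (simp add: card_Diff_singleton)
qed

lemma power_card_eq_self:
  fixes x :: "'a::{finite,field}"
  shows "x ^ card (UNIV :: 'a set) = x"
  using finite_UNIV_card_ge_0[where ?'a = 'a] power_card_minus_one_eq_one[of x]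
  by (cases "x = 0") (simp_all add: power_eq_if)

lemma CHAR_eq_of_card_eq_prime_power:
  assumes "prime p" and "card (UNIV :: 'a::{finite,field} set) = p ^ n"
  shows "CHAR('a) = p"
proof -
  have prime_char: "prime CHAR('a)"
    by (intro prime_CHAR_semidom finite_imp_CHAR_pos) auto
  then have "CHAR('a) dvd p"
    using CHAR_dvd_CARD[where 'a = 'a] assms(2) prime_dvd_power by metis
  then show ?thesis
    using prime_char assms(1) primes_dvd_imp_eq by blast
qed

lemma sum_lessThan_rotate:
  fixes m c :: nat
  assumes "0 < m"
  shows "(\<Sum>l<m. g ((l + c) mod m)) = (\<Sum>l<m. g l)"
proof -
  have inj: "inj_on (\<lambda>l. (l + c) mod m) {..<m}"
    by (rule inj_onI) (simp add: cong_def[symmetric] cong_add_rcancel_nat, simp add: cong_def)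
  then have "(\<lambda>l. (l + c) mod m) ` {..<m} = {..<m}"
    using assms by (intro endo_inj_surj) auto
  then show ?thesis
    using sum.reindex[OF inj, of g] by simp
qed

lemma sum_lessThan_reflect: "(\<Sum>k<m. g ((m - k) mod m)) = (\<Sum>k<(m::nat). g k)"
  by (rule sum.reindex_bij_witness[of _ "\<lambda>k. (m - k) mod m" "\<lambda>k. (m - k) mod m"])
     (auto simp: mod_if)

lemma power_q_power_add: "((x::'a::monoid_mult) ^ (q ^ a)) ^ (q ^ b) = x ^ (q ^ (a + b))"
  by (simp add: power_add power_mult)

lemma Fq_power_q_power: "(c::'a::field) \<in> Fq q \<Longrightarrow> c ^ (q ^ n) = c"
  by (induction n) (auto simp: Fq_def power_mult)

lemma is_dual_basis_sym: "is_dual_basis q m b b' \<Longrightarrow> is_dual_basis q m b' b"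
  unfolding is_dual_basis_def by (metis mult.commute)

lemma qpoly_eval_not_identically_zero:
  fixes c :: "nat \<Rightarrow> 'a::{finite,field}"
  assumes q: "2 \<le> q" and card: "q ^ (m - 1) < card (UNIV :: 'a set)"
    and j: "j < m" and cj: "c j \<noteq> 0"
  shows "\<exists>x. qpoly_eval q m c x \<noteq> 0"
proof (rule ccontr)
  assume "\<not> ?thesis"
  then have all_roots: "\<And>x. qpoly_eval q m c x = 0" by blast
  define P where "P = (\<Sum>l<m. monom (c l) (q ^ l))"
  have poly_P: "poly P x = qpoly_eval q m c x" for x
    by (simp add: P_def poly_sum poly_monom qpoly_eval_def)
  have coeff_P: "coeff P n = (\<Sum>l<m. if q ^ l = n then c l else 0)" for n
    by (simp add: P_def coeff_sum)
  have "coeff P (q ^ j) = c j"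
    unfolding coeff_P using q j by (simp add: power_inject_exp)
  then have "P \<noteq> 0"
    using cj by auto
  have "degree P \<le> q ^ (m - 1)"
  proof (rule degree_le, intro allI impI)
    fix n assume n: "q ^ (m - 1) < n"
    have "q ^ l \<le> q ^ (m - 1)" if "l < m" for l
      using that q by (intro power_increasing) auto
    with n show "coeff P n = 0"
      unfolding coeff_P by (intro sum.neutral) fastforce
  qed
  moreover have "card {x. poly P x = 0} \<le> degree P"
    by (rule card_poly_roots_bound[OF \<open>P \<noteq> 0\<close>])
  moreover have "{x. poly P x = 0} = UNIV"
    using poly_P all_roots by auto
  ultimately show False
    using card by simp
qed

locale Fq_extension =
  fixes q m k :: nat and field_type :: "'a::{finite,field} itself"
  assumes prime_char: "prime CHAR('a)" and q_eq: "q = CHAR('a) ^ k" and k_pos: "0 < k"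
    and m_pos: "1 \<le> m" and card_eq: "card (UNIV :: 'a set) = q ^ m"
begin

lemma q_ge_2: "2 \<le> q"
  using prime_ge_2_nat[OF prime_char] self_le_power[of "CHAR('a)" k] k_pos q_eq by simp

lemma frobenius_sum: "(sum (g :: _ \<Rightarrow> 'a) A) ^ (q ^ n) = (\<Sum>i\<in>A. g i ^ (q ^ n))"
  by (rule freshmans_dream_sum'[OF prime_char, where n = "k * n"]) (simp add: q_eq power_mult)

lemma frobenius_diff: "((x::'a) - y) ^ (q ^ n) = x ^ (q ^ n) - y ^ (q ^ n)"
  using freshmans_dream'[OF prime_char, where n = "k * n" and x = "x - y" and y = y]
  by (simp add: q_eq power_mult)

lemma power_q_power_mod: "(x::'a) ^ (q ^ n) = x ^ (q ^ (n mod m))"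
proof -
  have periodic: "x ^ (q ^ (m * t)) = x" for t
  proof (induction t)
    case (Suc t)
    have "x ^ (q ^ (m * Suc t)) = (x ^ (q ^ (m * t))) ^ (q ^ m)"
      by (simp add: power_q_power_add algebra_simps)
    then show ?case
      using Suc power_card_eq_self[of x] card_eq by simp
  qed simp
  have "x ^ (q ^ n) = (x ^ (q ^ (m * (n div m)))) ^ (q ^ (n mod m))"
    by (simp add: power_q_power_add)
  then show ?thesis
    using periodic by simp
qed

lemma power_q_power_cong: "a mod m = b mod m \<Longrightarrow> (x::'a) ^ (q ^ a) = x ^ (q ^ b)"
  by (metis power_q_power_mod)

lemma trace_sum: "trace q m (sum (g :: _ \<Rightarrow> 'a) A) = (\<Sum>i\<in>A. trace q m (g i))"
  unfolding trace_def by (simp add: frobenius_sum sum.swap[of _ A])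

lemma trace_diff: "trace q m ((x::'a) - y) = trace q m x - trace q m y"
  unfolding trace_def by (simp add: frobenius_diff sum_subtractf)

lemma trace_scale: "(c::'a) \<in> Fq q \<Longrightarrow> trace q m (c * x) = c * trace q m x"
  unfolding trace_def by (simp add: power_mult_distrib Fq_power_q_power sum_distrib_left)

lemma trace_in_Fq: "trace q m (x::'a) \<in> Fq q"
proof -
  have "trace q m x ^ q = (\<Sum>l<m. (x ^ (q ^ l)) ^ (q ^ 1))"
    unfolding trace_def using frobenius_sum[of _ _ 1] by simp
  also have "\<dots> = (\<Sum>l<m. x ^ (q ^ Suc l))"
    by (simp only: power_q_power_add) simp
  also have "\<dots> = (\<Sum>l<m. x ^ (q ^ ((l + 1) mod m)))"
    by (intro sum.cong refl power_q_power_cong) simp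
  also have "\<dots> = trace q m x"
    unfolding trace_def using sum_lessThan_rotate[of m "\<lambda>l. x ^ (q ^ l)" 1] m_pos by simp
  finally show ?thesis
    unfolding Fq_def by simp
qed

lemma trace_nondegenerate:
  assumes "(w::'a) \<noteq> 0"
  shows "\<exists>x. trace q m (w * x) \<noteq> 0"
proof -
  have "trace q m (w * x) = qpoly_eval q m (\<lambda>l. w ^ (q ^ l)) x" for x
    by (simp add: trace_def qpoly_eval_def power_mult_distrib)
  moreover have "q ^ (m - 1) < card (UNIV :: 'a set)"
    using q_ge_2 m_pos card_eq by (simp add: power_strict_increasing)
  ultimately show ?thesis
    using qpoly_eval_not_identically_zero[OF q_ge_2, where j = "m - 1" and c = "\<lambda>l. w ^ (q ^ l)"]
      m_pos assms
    by simp
qed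

lemma trace_dual_basis_coord:
  assumes "is_dual_basis q m b b'" and "\<forall>i<m. (c i::'a) \<in> Fq q" and "j < m"
  shows "trace q m ((\<Sum>i<m. c i * b i) * b' j) = c j"
proof -
  have "trace q m ((\<Sum>i<m. c i * b i) * b' j) = (\<Sum>i<m. c i * trace q m (b i * b' j))"
    using assms(2) by (simp add: sum_distrib_right trace_sum trace_scale mult.assoc)
  also have "\<dots> = (\<Sum>i<m. c i * (if i = j then 1 else 0))"
    using assms(1,3) by (intro sum.cong refl) (simp add: is_dual_basis_def)
  also have "\<dots> = c j"
    using assms(3) by (simp add: if_distrib cong: if_cong)
  finally show ?thesis .
qed

lemma coords_eq_trace:
  assumes "is_basis q m b" and "is_dual_basis q m b b'" and "j < m"
  shows "coords q m b (y::'a) j = trace q m (y * b' j)"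
proof -
  let ?P = "\<lambda>c. (\<forall>i<m. c i \<in> Fq q) \<and> (\<forall>i\<ge>m. c i = 0) \<and> y = (\<Sum>i<m. c i * b i)"
  have "\<exists>!c. ?P c"
    using assms(1) unfolding is_basis_def by blast
  then have "?P (coords q m b y)"
    unfolding coords_def by (rule theI')
  then show ?thesis
    using trace_dual_basis_coord[OF assms(2), of "coords q m b y" j] assms(3) by metis
qed

lemma eq_if_trace_pairings_eq:
  assumes "is_basis q m b" and "\<forall>j<m. trace q m ((y::'a) * b j) = trace q m (z * b j)"
  shows "y = z"
proof -
  have "trace q m ((y - z) * x) = 0" for x
  proof -
    obtain e where e: "\<forall>i<m. e i \<in> Fq q" "x = (\<Sum>i<m. e i * b i)"
      using assms(1) unfolding is_basis_def by blast
    have "trace q m ((y - z) * x) = (\<Sum>i<m. trace q m (e i * ((y - z) * b i)))"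
      unfolding e(2) by (simp add: sum_distrib_left trace_sum mult_ac)
    also have "\<dots> = 0"
      using e(1) assms(2) by (intro sum.neutral) (simp add: trace_scale trace_diff left_diff_distrib)
    finally show ?thesis .
  qed
  then show ?thesis
    using trace_nondegenerate[of "y - z"] by auto
qed

lemma dual_basis_is_basis:
  assumes b: "is_basis q m b" and dual: "is_dual_basis q m b (b'::nat \<Rightarrow> 'a)"
  shows "is_basis q m b'"
  unfolding is_basis_def
proof
  fix y :: 'a
  have dual': "is_dual_basis q m b' b"
    by (rule is_dual_basis_sym[OF dual])
  define c where "c i = (if i < m then trace q m (y * b i) else 0)" for i
  have c_Fq: "\<forall>i<m. c i \<in> Fq q"
    by (simp add: c_def trace_in_Fq)
  have pairings: "trace q m ((\<Sum>i<m. c i * b' i) * b j) = trace q m (y * b j)" if "j < m" for j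
    unfolding trace_dual_basis_coord[OF dual' c_Fq that] using that by (simp add: c_def)
  have "y = (\<Sum>i<m. c i * b' i)"
    using pairings by (intro eq_if_trace_pairings_eq[OF b]) simp
  then show "\<exists>!c. (\<forall>i<m. c i \<in> Fq q) \<and> (\<forall>i\<ge>m. c i = 0) \<and> y = (\<Sum>i<m. c i * b' i)"
  proof (intro ex1I[of _ c] conjI)
    fix c' assume c': "(\<forall>i<m. c' i \<in> Fq q) \<and> (\<forall>i\<ge>m. c' i = 0) \<and> y = (\<Sum>i<m. c' i * b' i)"
    show "c' = c"
    proof
      fix j show "c' j = c j"
        using c' trace_dual_basis_coord[OF dual', of c' j] by (cases "j < m") (auto simp: c_def)
    qed
  qed (use c_Fq in \<open>auto simp: c_def\<close>)
qed

lemma trace_qpoly_eval_qrev: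
  fixes f :: "nat \<Rightarrow> 'a" and x y :: 'a
  shows "trace q m (qpoly_eval q m f x * y) = trace q m (x * qpoly_eval q m (qrev q m f) y)"
proof -
  define G where "G i n = f i ^ (q ^ n) * x ^ (q ^ (n + i)) * y ^ (q ^ n)" for i n
  define H where "H k l = x ^ (q ^ l) * f ((m - k) mod m) ^ (q ^ (l + k)) * y ^ (q ^ (l + k))" for k l
  have lhs: "trace q m (qpoly_eval q m f x * y) = (\<Sum>l<m. \<Sum>i<m. G i l)"
    unfolding trace_def qpoly_eval_def G_def
    by (simp add: sum_distrib_right frobenius_sum power_mult_distrib power_q_power_add add.commute)
  have rhs: "trace q m (x * qpoly_eval q m (qrev q m f) y) = (\<Sum>l<m. \<Sum>k<m. H k l)"
    unfolding trace_def qpoly_eval_def qrev_def H_def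
    by (simp add: sum_distrib_left frobenius_sum power_mult_distrib power_q_power_add add.commute
        mult.assoc)
  have H_shift: "H k ((n + (m - k)) mod m) = G ((m - k) mod m) n" if "k < m" for k n
  proof -
    have "((n + (m - k)) mod m + k) mod m = n mod m"
      using that by (simp add: mod_add_left_eq)
    then have "z ^ (q ^ ((n + (m - k)) mod m + k)) = z ^ (q ^ n)" for z :: 'a
      by (rule power_q_power_cong)
    moreover have "x ^ (q ^ ((n + (m - k)) mod m)) = x ^ (q ^ (n + (m - k) mod m))"
      by (rule power_q_power_cong) (simp add: mod_add_right_eq)
    ultimately show ?thesis
      unfolding H_def G_def by (simp add: mult_ac)
  qed
  have "(\<Sum>l<m. \<Sum>k<m. H k l) = (\<Sum>k<m. \<Sum>l<m. H k l)"
    by (rule sum.swap)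
  also have "\<dots> = (\<Sum>k<m. \<Sum>n<m. H k ((n + (m - k)) mod m))"
    using m_pos by (intro sum.cong refl sum_lessThan_rotate[symmetric]) simp
  also have "\<dots> = (\<Sum>k<m. \<Sum>n<m. G ((m - k) mod m) n)"
    by (intro sum.cong refl H_shift) simp
  also have "\<dots> = (\<Sum>l<m. \<Sum>i<m. G i l)"
    by (subst sum_lessThan_reflect[of "\<lambda>i. \<Sum>n<m. G i n"]) (rule sum.swap)
  finally show ?thesis
    using lhs rhs by simp
qed

lemma rep_mat_eq_trace:
  assumes "is_basis q m b" and "is_dual_basis q m b b'" and "i < m" and "j < m"
  shows "rep_mat q m T a b $$ (i, j) = trace q m (T (a i) * (b' j :: 'a))"
  using assms by (simp add: rep_mat_def coords_eq_trace)

lemma rep_mat_qrev_eq_transpose: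
  assumes "is_basis q m \<alpha>" and "is_basis q m \<beta>"
    and "is_dual_basis q m \<alpha> \<alpha>'" and "is_dual_basis q m \<beta> (\<beta>' :: nat \<Rightarrow> 'a)"
  shows "rep_mat q m (qpoly_eval q m (qrev q m f)) \<beta>' \<alpha>'
    = transpose_mat (rep_mat q m (qpoly_eval q m f) \<alpha> \<beta>)"
proof (rule eq_matI)
  have basis': "is_basis q m \<alpha>'" and dual': "is_dual_basis q m \<alpha>' \<alpha>"
    using dual_basis_is_basis is_dual_basis_sym assms(1,3) by blast+
  fix i j assume "i < dim_row (transpose_mat (rep_mat q m (qpoly_eval q m f) \<alpha> \<beta>))"
    and "j < dim_col (transpose_mat (rep_mat q m (qpoly_eval q m f) \<alpha> \<beta>))"
  then have i: "i < m" and j: "j < m"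
    by (auto simp: rep_mat_def)
  have "rep_mat q m (qpoly_eval q m (qrev q m f)) \<beta>' \<alpha>' $$ (i, j)
      = trace q m (\<alpha> j * qpoly_eval q m (qrev q m f) (\<beta>' i))"
    using rep_mat_eq_trace[OF basis' dual' i j] by (simp add: mult.commute)
  also have "\<dots> = trace q m (qpoly_eval q m f (\<alpha> j) * \<beta>' i)"
    by (rule trace_qpoly_eval_qrev[symmetric])
  also have "\<dots> = transpose_mat (rep_mat q m (qpoly_eval q m f) \<alpha> \<beta>) $$ (i, j)"
    using rep_mat_eq_trace[OF assms(2,4) j i] i j by (simp add: rep_mat_def)
  finally show "rep_mat q m (qpoly_eval q m (qrev q m f)) \<beta>' \<alpha>' $$ (i, j)
      = transpose_mat (rep_mat q m (qpoly_eval q m f) \<alpha> \<beta>) $$ (i, j)" .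
qed (auto simp: rep_mat_def)

end

theorem lemma1:
  fixes q m :: nat
    and f :: "nat \<Rightarrow> 'a::{finite, field}"
    and \<alpha> \<alpha>' \<beta> \<beta>' :: "nat \<Rightarrow> 'a"
    and M :: "'a mat"
  assumes "\<exists>p k. prime p \<and> k > 0 \<and> q = p ^ k"
    and "m \<ge> 1"
    and "card (UNIV :: 'a set) = q ^ m"
    and "is_basis q m \<alpha>" and "is_basis q m \<beta>"
    and "is_dual_basis q m \<alpha> \<alpha>'" and "is_dual_basis q m \<beta> \<beta>'"
    and "M \<in> carrier_mat m m"
    and "\<forall>i<m. \<forall>j<m. M $$ (i, j) \<in> Fq q"
  shows "M = rep_mat q m (qpoly_eval q m f) \<alpha> \<beta>
     \<longleftrightarrow> transpose_mat M = rep_mat q m (qpoly_eval q m (qrev q m f)) \<beta>' \<alpha>'"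
proof -
  obtain p k where p: "prime p" and k: "k > 0" and q: "q = p ^ k"
    using assms(1) by blast
  then have "CHAR('a) = p"
    using CHAR_eq_of_card_eq_prime_power[of p "k * m"] assms(3) by (simp add: power_mult)
  then interpret Fq_extension q m k "TYPE('a)"
    using p k q assms(2,3) by unfold_locales auto
  show ?thesis
    unfolding rep_mat_qrev_eq_transpose[OF assms(4-7)] by (metis transpose_transpose)
qed

end
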